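(* Let $\nu$ be a Borel probability measure on $\mathbb{R}$ with support $\Omega\subseteq[0,1]$ which is an R-spectral measure, and let $q\ge1$ be an integer such that $q\mathcal{Z}_\nu\subseteq\mathbb{Z}$, where $\mathcal{Z}_\nu=\{\xi\in\mathbb{R}:\widehat\nu(\xi)=0\}$. Let $\mathcal{C}$ be a finite set of nonnegative integers, $P=\{p_c\}_{c\in\mathcal{C}}$ with $p_c>0$, $\sum_cp_c=1$, let $\eta=\sum_{c\in\mathcal{C}}p_c\delta_c$ and $\eta_q=\sum_{c\in\mathcal{C}}p_c\delta_{qc}$. Then $\mu=\eta_q*\nu$ is a spectral measure if and only if both $\eta$ and $\nu$ are spectral measures.
   Context: $\widehat\nu(\xi)=\int e^{2\pi i\xi x}d\nu(x)$. A probability measure $\rho$ is a spectral measure if $\{e^{2\pi i\lambda x}:\lambda\in\Lambda\}$ is an orthonormal basis of $L^2(\rho)$ for some countable $\Lambda$; it is an R-spectral measure if such a family is a Riesz basis (a basis that is also a frame) of $L^2(\rho)$. $*$ denotes convolution. *)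

theory Defs
  imports "HOL-Probability.Probability"
begin

definition expo :: "real \<Rightarrow> real \<Rightarrow> complex" where
  "expo l x = cis (2 * pi * l * x)"

definition fourier_measure :: "real measure \<Rightarrow> real \<Rightarrow> complex" where
  "fourier_measure \<nu> \<xi> = (\<integral>x. expo \<xi> x \<partial>\<nu>)"

definition zero_set :: "real measure \<Rightarrow> real set" where
  "zero_set \<nu> = {\<xi>. fourier_measure \<nu> \<xi> = 0}"

definition measure_support :: "real measure \<Rightarrow> real set" where
  "measure_support \<nu> = {x. \<forall>e>0. emeasure \<nu> (ball x e) > 0}"

definition L2 :: "real measure \<Rightarrow> (real \<Rightarrow> complex) set" where
  "L2 \<rho> = {f. f \<in> borel_measurable \<rho> \<and> integrable \<rho> (\<lambda>x. (cmod (f x))\<^sup>2)}"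

definition inner_L2 :: "real measure \<Rightarrow> (real \<Rightarrow> complex) \<Rightarrow> (real \<Rightarrow> complex) \<Rightarrow> complex" where
  "inner_L2 \<rho> f g = (\<integral>x. f x * cnj (g x) \<partial>\<rho>)"

definition normsq_L2 :: "real measure \<Rightarrow> (real \<Rightarrow> complex) \<Rightarrow> real" where
  "normsq_L2 \<rho> f = (\<integral>x. (cmod (f x))\<^sup>2 \<partial>\<rho>)"

definition exp_ONB :: "real measure \<Rightarrow> real set \<Rightarrow> bool" where
  "exp_ONB \<rho> \<Lambda> \<longleftrightarrow>
     (\<forall>l\<in>\<Lambda>. \<forall>l'\<in>\<Lambda>. inner_L2 \<rho> (expo l) (expo l') = (if l = l' then 1 else 0)) \<and>
     (\<forall>f\<in>L2 \<rho>. (\<forall>l\<in>\<Lambda>. inner_L2 \<rho> f (expo l) = 0) \<longrightarrow> (AE x in \<rho>. f x = 0))"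

definition spectral_measure :: "real measure \<Rightarrow> bool" where
  "spectral_measure \<rho> \<longleftrightarrow> (\<exists>\<Lambda>. countable \<Lambda> \<and> exp_ONB \<rho> \<Lambda>)"

definition exp_frame :: "real measure \<Rightarrow> real set \<Rightarrow> bool" where
  "exp_frame \<rho> \<Lambda> \<longleftrightarrow> (\<exists>A B. 0 < A \<and> 0 < B \<and>
     (\<forall>f\<in>L2 \<rho>. (\<lambda>l. (cmod (inner_L2 \<rho> f (expo l)))\<^sup>2) summable_on \<Lambda> \<and>
        A * normsq_L2 \<rho> f \<le> (\<Sum>\<^sub>\<infinity>l\<in>\<Lambda>. (cmod (inner_L2 \<rho> f (expo l)))\<^sup>2) \<and>
        (\<Sum>\<^sub>\<infinity>l\<in>\<Lambda>. (cmod (inner_L2 \<rho> f (expo l)))\<^sup>2) \<le> B * normsq_L2 \<rho> f))"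

definition exp_riesz_seq :: "real measure \<Rightarrow> real set \<Rightarrow> bool" where
  "exp_riesz_seq \<rho> \<Lambda> \<longleftrightarrow> (\<exists>A B. 0 < A \<and> 0 < B \<and>
     (\<forall>F c. finite F \<and> F \<subseteq> \<Lambda> \<longrightarrow>
        A * (\<Sum>l\<in>F. (cmod (c l))\<^sup>2) \<le> normsq_L2 \<rho> (\<lambda>x. \<Sum>l\<in>F. c l * expo l x) \<and>
        normsq_L2 \<rho> (\<lambda>x. \<Sum>l\<in>F. c l * expo l x) \<le> B * (\<Sum>l\<in>F. (cmod (c l))\<^sup>2)))"

text \<open>Riesz basis = frame that is a basis (= complete Riesz sequence).\<close>
definition R_spectral_measure :: "real measure \<Rightarrow> bool" where
  "R_spectral_measure \<rho> \<longleftrightarrow>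
     (\<exists>\<Lambda>. countable \<Lambda> \<and> exp_frame \<rho> \<Lambda> \<and> exp_riesz_seq \<rho> \<Lambda>)"

definition disc_measure :: "nat set \<Rightarrow> (nat \<Rightarrow> real) \<Rightarrow> (nat \<Rightarrow> real) \<Rightarrow> real measure" where
  "disc_measure C p a = measure_of UNIV (sets borel)
     (\<lambda>A. \<Sum>c\<in>C. if a c \<in> A then ennreal (p c) else 0)"

end

(*
  Its Fourier transform factors as hat mu = hat eta_q * hat nu, where hat eta_q
  is 1 on q^-1 Z while, by hypothesis, hat nu vanishes only on q^-1 Z.  So for a spectrum Lambda of mu,
  distinct members congruent modulo q^-1 Z are orthogonal for nu, and incongruent ones for eta_q.

  If S is a spectrum of eta and T a spectrum of nu containing 0 (hence T within q^-1 Z), then S / q + T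
  is a spectrum of mu: completeness is tested on the fibres y + q C, which carry a copy of eta.

  Conversely, as supp nu lies in [0, 1], the translates q c + supp nu are essentially disjoint, so functions
  on nu and on eta glue to functions on mu.  Then one class of Lambda is a spectrum of nu, and q times a
  set of class representatives a spectrum of eta.  The translates overlap only for q = 1 with atoms of nu
  at 0 and 1; then an explicit function on these atoms shows that mu is not spectral, and so, by the first
  direction, eta and nu are not both spectral.
*)

theory Submission
  imports Defs
begin

lemma expo_add: "expo l (x + y) = expo l x * expo l y"
  by (simp add: expo_def distrib_left cis_mult[symmetric] algebra_simps)

lemma expo_add_freq: "expo (l + l') x = expo l x * expo l' x"
  by (simp add: expo_def distrib_left distrib_right cis_mult[symmetric] algebra_simps)

lemma expo_mult_cnj: "expo l x * cnj (expo l' x) = expo (l - l') x"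
  by (simp add: expo_def cis_cnj cis_mult algebra_simps)

lemma cnj_expo: "cnj (expo l x) = expo (- l) x"
  by (simp add: expo_def cis_cnj)

lemma norm_expo [simp]: "cmod (expo l x) = 1"
  by (simp add: expo_def)

lemma expo_nonzero [simp]: "expo l x \<noteq> 0"
  by (metis norm_expo norm_zero zero_neq_one)

lemma expo_zero [simp]: "expo 0 x = 1" "expo l 0 = 1"
  by (simp_all add: expo_def)

lemma expo_eq_1_if_Ints:
  assumes "l * x \<in> \<int>"
  shows "expo l x = 1"
proof -
  from assms obtain k where k: "l * x = of_int k" by (auto elim: Ints_cases)
  have "expo l x = cis (2 * pi * of_int k)"
    unfolding expo_def by (simp add: k[symmetric] mult_ac)
  also have "\<dots> = 1" by (simp add: cis_conv_exp exp_eq_1)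
  finally show ?thesis .
qed

lemma borel_measurable_expo [measurable]: "expo l \<in> borel_measurable borel"
  unfolding expo_def by (intro borel_measurable_continuous_onI continuous_intros)

lemma fourier_measure_zero:
  assumes "prob_space \<rho>"
  shows "fourier_measure \<rho> 0 = 1"
  using prob_space.prob_space[OF assms] by (simp add: fourier_measure_def measure_def)

lemma inner_L2_expo_expo: "inner_L2 \<rho> (expo l) (expo l') = fourier_measure \<rho> (l - l')"
  by (simp add: inner_L2_def fourier_measure_def expo_mult_cnj)

lemma L2_integrable:
  assumes "finite_measure \<rho>" "f \<in> L2 \<rho>"
  shows "integrable \<rho> f"
proof -
  interpret finite_measure \<rho> by fact
  have f: "f \<in> borel_measurable \<rho>" "integrable \<rho> (\<lambda>x. (cmod (f x))\<^sup>2)"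
    using assms(2) by (auto simp: L2_def)
  then have "integrable \<rho> (\<lambda>x. cmod (f x))"
    using square_integrable_imp_integrable[of "\<lambda>x. cmod (f x)"] by simp
  then show ?thesis using f(1) by (simp add: integrable_norm_iff)
qed

lemma L2_mult_bounded:
  assumes "f \<in> L2 \<rho>" "g \<in> borel_measurable \<rho>" "\<And>x. cmod (g x) \<le> K"
  shows "(\<lambda>x. f x * g x) \<in> L2 \<rho>"
proof -
  have m: "f \<in> borel_measurable \<rho>" and i: "integrable \<rho> (\<lambda>x. (cmod (f x))\<^sup>2)"
    using assms(1) by (auto simp: L2_def)
  have "integrable \<rho> (\<lambda>x. K\<^sup>2 * (cmod (f x))\<^sup>2)" using i by auto
  then have "integrable \<rho> (\<lambda>x. (cmod (f x * g x))\<^sup>2)"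
  proof (rule Bochner_Integration.integrable_bound)
    show "AE x in \<rho>. norm ((cmod (f x * g x))\<^sup>2) \<le> norm (K\<^sup>2 * (cmod (f x))\<^sup>2)"
    proof (intro AE_I2)
      fix x
      have "(cmod (g x))\<^sup>2 \<le> K\<^sup>2" using assms(3)[of x] by (intro power_mono) auto
      then have "(cmod (f x))\<^sup>2 * (cmod (g x))\<^sup>2 \<le> (cmod (f x))\<^sup>2 * K\<^sup>2"
        by (rule mult_left_mono) auto
      then show "norm ((cmod (f x * g x))\<^sup>2) \<le> norm (K\<^sup>2 * (cmod (f x))\<^sup>2)"
        by (simp add: norm_mult power_mult_distrib mult.commute)
    qed
  qed (use m assms(2) in auto)
  then show ?thesis using m assms(2) by (auto simp: L2_def)
qed

lemma L2_add:
  assumes "f \<in> L2 \<rho>" "g \<in> L2 \<rho>"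
  shows "(\<lambda>x. f x + g x) \<in> L2 \<rho>"
proof -
  have m: "f \<in> borel_measurable \<rho>" "g \<in> borel_measurable \<rho>"
    and i: "integrable \<rho> (\<lambda>x. (cmod (f x))\<^sup>2)" "integrable \<rho> (\<lambda>x. (cmod (g x))\<^sup>2)"
    using assms by (auto simp: L2_def)
  have "integrable \<rho> (\<lambda>x. 2 * (cmod (f x))\<^sup>2 + 2 * (cmod (g x))\<^sup>2)" using i by auto
  then have "integrable \<rho> (\<lambda>x. (cmod (f x + g x))\<^sup>2)"
  proof (rule Bochner_Integration.integrable_bound)
    show "AE x in \<rho>. norm ((cmod (f x + g x))\<^sup>2) \<le> norm (2 * (cmod (f x))\<^sup>2 + 2 * (cmod (g x))\<^sup>2)"
    proof (intro AE_I2)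
      fix x
      have "(cmod (f x + g x))\<^sup>2 \<le> (cmod (f x) + cmod (g x))\<^sup>2"
        using norm_triangle_ineq[of "f x" "g x"] by (intro power_mono) auto
      also have "\<dots> \<le> 2 * (cmod (f x))\<^sup>2 + 2 * (cmod (g x))\<^sup>2"
        using zero_le_power2[of "cmod (f x) - cmod (g x)"] by (simp add: power2_eq_square algebra_simps)
      finally show "norm ((cmod (f x + g x))\<^sup>2) \<le> norm (2 * (cmod (f x))\<^sup>2 + 2 * (cmod (g x))\<^sup>2)"
        by simp
    qed
  qed (use m in auto)
  then show ?thesis using m by (auto simp: L2_def)
qed

lemma L2_sum:
  assumes "\<And>i. i \<in> I \<Longrightarrow> f i \<in> L2 \<rho>"
  shows "(\<lambda>x. \<Sum>i\<in>I. f i x) \<in> L2 \<rho>"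
  using assms
proof (induction I rule: infinite_finite_induct)
  case (insert i I)
  then show ?case using L2_add[of "f i" \<rho> "\<lambda>x. \<Sum>i\<in>I. f i x"] by simp
qed (auto simp: L2_def)

lemma L2_const:
  assumes "finite_measure \<rho>"
  shows "(\<lambda>x. c) \<in> L2 \<rho>"
proof -
  interpret finite_measure \<rho> by fact
  show ?thesis by (simp add: L2_def)
qed

lemma L2_cmult:
  assumes "f \<in> L2 \<rho>"
  shows "(\<lambda>x. c * f x) \<in> L2 \<rho>"
  using L2_mult_bounded[OF assms, of "\<lambda>_. c" "cmod c"] by (simp add: mult.commute)

lemma L2_bounded_measurable:
  assumes "finite_measure \<rho>" "sets \<rho> = sets borel" "g \<in> borel_measurable borel" "\<And>x. cmod (g x) \<le> K"
  shows "g \<in> L2 \<rho>"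
  using L2_mult_bounded[OF L2_const[OF assms(1), of 1], of g K] assms(3,4)
  by (simp add: measurable_cong_sets[OF assms(2) refl])

lemma integrable_inner_expo:
  assumes "finite_measure \<rho>" "sets \<rho> = sets borel" "f \<in> L2 \<rho>"
  shows "integrable \<rho> (\<lambda>x. f x * cnj (expo l x))"
proof -
  have "(\<lambda>x. f x * cnj (expo l x)) \<in> L2 \<rho>"
    using assms(2,3) by (intro L2_mult_bounded[where K=1])
      (auto simp: measurable_cong_sets[OF assms(2) refl] cnj_expo)
  then show ?thesis using L2_integrable assms(1) by blast
qed

lemma exp_ONB_nonempty:
  assumes "prob_space \<rho>" "exp_ONB \<rho> \<Lambda>"
  shows "\<Lambda> \<noteq> {}"
proof
  assume "\<Lambda> = {}"
  then have "AE x in \<rho>. (1::complex) = 0"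
    using assms L2_const[of \<rho> 1] by (auto simp: exp_ONB_def prob_space_def)
  then show False using prob_space.AE_const[OF assms(1)] by simp
qed

lemma exp_ONB_diff_in_zero_set:
  assumes "exp_ONB \<rho> \<Lambda>" "l \<in> \<Lambda>" "l' \<in> \<Lambda>" "l \<noteq> l'"
  shows "l - l' \<in> zero_set \<rho>"
  using assms by (auto simp: exp_ONB_def zero_set_def inner_L2_expo_expo[symmetric])

lemma exp_ONB_translate:
  assumes "finite_measure \<rho>" "sets \<rho> = sets borel" "exp_ONB \<rho> \<Lambda>"
  shows "exp_ONB \<rho> ((\<lambda>l. l - t) ` \<Lambda>)"
  unfolding exp_ONB_def
proof (intro conjI ballI impI)
  fix a b assume "a \<in> (\<lambda>l. l - t) ` \<Lambda>" "b \<in> (\<lambda>l. l - t) ` \<Lambda>"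
  then obtain l l' where "l \<in> \<Lambda>" "a = l - t" "l' \<in> \<Lambda>" "b = l' - t" by auto
  then show "inner_L2 \<rho> (expo a) (expo b) = (if a = b then 1 else 0)"
    using assms(3) by (auto simp: exp_ONB_def inner_L2_expo_expo)
next
  fix f assume f: "f \<in> L2 \<rho>" and orth: "\<forall>a\<in>(\<lambda>l. l - t) ` \<Lambda>. inner_L2 \<rho> f (expo a) = 0"
  define g where "g x = f x * expo t x" for x
  have "g \<in> L2 \<rho>"
    unfolding g_def by (rule L2_mult_bounded[OF f, where K=1])
      (auto simp: measurable_cong_sets[OF assms(2) refl])
  moreover have "inner_L2 \<rho> g (expo l) = inner_L2 \<rho> f (expo (l - t))" for l
    unfolding inner_L2_def g_def
    by (intro Bochner_Integration.integral_cong refl) (simp add: cnj_expo mult.assoc flip: expo_add_freq)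
  ultimately have "AE x in \<rho>. g x = 0" using assms(3) orth by (auto simp: exp_ONB_def)
  then show "AE x in \<rho>. f x = 0" by eventually_elim (simp add: g_def)
qed

lemma AE_atom:
  assumes "AE x in \<rho>. P x" "emeasure \<rho> {s} > 0" "{s} \<in> sets \<rho>"
  shows "P s"
proof (rule ccontr)
  assume "\<not> P s"
  obtain N where N: "{x \<in> space \<rho>. \<not> P x} \<subseteq> N" "emeasure \<rho> N = 0" "N \<in> sets \<rho>"
    using assms(1) by (rule AE_E)
  have "s \<in> space \<rho>" using assms(3) sets.sets_into_space by blast
  then have "emeasure \<rho> {s} \<le> emeasure \<rho> N" using N \<open>\<not> P s\<close> by (intro emeasure_mono) auto
  then show False using N assms(2) by simp
qed

text \<open>The complement of the support is covered by the null balls with rational centre and radius.\<close>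

lemma AE_measure_support:
  assumes sets: "sets \<rho> = sets borel"
  shows "AE x in \<rho>. x \<in> measure_support \<rho>"
proof -
  define B where "B = {(r, s). r \<in> \<rat> \<and> s \<in> \<rat> \<and> emeasure \<rho> (ball r s) = 0}"
  have "countable B"
    by (rule countable_subset[of _ "\<rat> \<times> \<rat>"]) (auto simp: B_def intro: countable_SIGMA countable_rat)
  then have null: "(\<Union>i\<in>B. ball (fst i) (snd i)) \<in> null_sets \<rho>"
    by (rule null_sets_UN') (auto simp: B_def null_sets_def sets)
  show ?thesis
  proof (rule AE_I'[OF null], safe)
    fix x assume "x \<notin> measure_support \<rho>"
    then obtain e where e: "e > 0" "emeasure \<rho> (ball x e) = 0"
      by (auto simp: measure_support_def not_gr_zero)
    obtain r where r: "r \<in> \<rat>" "dist r x < e/4"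
      using Rats_dense_in_real[of "x - e/4" "x + e/4"] e by (auto simp: dist_real_def abs_real_def)
    obtain s where s: "s \<in> \<rat>" "e/4 < s" "s < e/2"
      using Rats_dense_in_real[of "e/4" "e/2"] e by auto
    have "ball r s \<subseteq> ball x e"
    proof
      fix z assume "z \<in> ball r s"
      then show "z \<in> ball x e" using r s dist_triangle[of x z r] by (simp add: dist_commute)
    qed
    then have "emeasure \<rho> (ball r s) = 0"
      using e emeasure_mono[of "ball r s" "ball x e" \<rho>] by (simp add: sets)
    then have "(r, s) \<in> B" using r s by (auto simp: B_def)
    moreover have "x \<in> ball r s" using r s by (simp add: dist_commute)
    ultimately show "x \<in> (\<Union>i\<in>B. ball (fst i) (snd i))" by force
  qed
qed

lemma disc_measure_eq_distr:
  assumes "finite C"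
  shows "disc_measure C p a = distr (density (count_space C) (\<lambda>c. ennreal (p c))) borel a"
    (is "_ = ?D")
proof -
  have "emeasure ?D A = (\<Sum>c\<in>C. if a c \<in> A then ennreal (p c) else 0)" if "A \<in> sets borel" for A
  proof -
    have "emeasure ?D A = (\<integral>\<^sup>+ c. ennreal (p c) * indicator (a -` A \<inter> C) c \<partial>count_space C)"
      using that by (simp add: emeasure_distr emeasure_density)
    also have "\<dots> = (\<Sum>c\<in>C. if a c \<in> A then ennreal (p c) else 0)"
      using assms by (simp add: nn_integral_count_space_finite indicator_def sum.inter_restrict)
    finally show ?thesis .
  qed
  then have "disc_measure C p a = measure_of (space ?D) (sets ?D) (emeasure ?D)"
    unfolding disc_measure_def
    by (simp, intro measure_of_eq) (auto simp: sets.sigma_sets_eq[of borel, simplified])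
  also have "\<dots> = ?D" by (rule measure_of_of_measure)
  finally show ?thesis .
qed

lemma sets_disc_measure [simp, measurable_cong]: "sets (disc_measure C p a) = sets borel"
  unfolding disc_measure_def by (simp add: sets_measure_of_conv sets.sigma_sets_eq[of borel, simplified])

lemma space_disc_measure [simp]: "space (disc_measure C p a) = UNIV"
  unfolding disc_measure_def by (simp add: space_measure_of_conv)

lemma borel_measurable_disc_measure [simp]:
  "borel_measurable (disc_measure C p a) = borel_measurable borel"
  by (rule measurable_cong_sets) auto

lemma nn_integral_disc_measure:
  assumes "finite C" "g \<in> borel_measurable borel"
  shows "(\<integral>\<^sup>+x. g x \<partial>disc_measure C p a) = (\<Sum>c\<in>C. ennreal (p c) * g (a c))"
  using assms by (simp add: disc_measure_eq_distr nn_integral_distr nn_integral_density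
      nn_integral_count_space_finite)

lemma emeasure_disc_measure:
  assumes "finite C" "A \<in> sets borel"
  shows "emeasure (disc_measure C p a) A = (\<Sum>c\<in>C. if a c \<in> A then ennreal (p c) else 0)"
proof -
  have "emeasure (disc_measure C p a) A = (\<integral>\<^sup>+x. indicator A x \<partial>disc_measure C p a)"
    using assms(2) by simp
  also have "\<dots> = (\<Sum>c\<in>C. if a c \<in> A then ennreal (p c) else 0)"
    using assms by (simp add: nn_integral_disc_measure indicator_def sum.inter_restrict)
  finally show ?thesis .
qed

lemma integral_disc_measure:
  fixes h :: "real \<Rightarrow> 'b::{banach, second_countable_topology}"
  assumes "finite C" "\<forall>c\<in>C. p c \<ge> 0" "h \<in> borel_measurable borel"
  shows "integral\<^sup>L (disc_measure C p a) h = (\<Sum>c\<in>C. p c *\<^sub>R h (a c))"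
  using assms
  by (simp add: disc_measure_eq_distr integral_distr integral_density AE_count_space
      lebesgue_integral_count_space_finite)

lemma integrable_disc_measure:
  fixes h :: "real \<Rightarrow> 'b::{banach, second_countable_topology}"
  assumes "finite C" "\<forall>c\<in>C. p c \<ge> 0" "h \<in> borel_measurable borel"
  shows "integrable (disc_measure C p a) h"
proof -
  have "integrable (density (count_space C) (\<lambda>c. ennreal (p c))) (\<lambda>c. h (a c))"
    using assms by (subst integrable_density) (auto simp: AE_count_space integrable_count_space)
  then show ?thesis
    using assms by (simp add: disc_measure_eq_distr integrable_distr_eq)
qed

lemma L2_disc_measure:
  assumes "finite C" "\<forall>c\<in>C. p c \<ge> 0" "h \<in> borel_measurable borel"
  shows "h \<in> L2 (disc_measure C p a)"
  using assms integrable_disc_measure[OF assms(1,2), of "\<lambda>x. (cmod (h x))\<^sup>2"] by (auto simp: L2_def)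

lemma inner_L2_disc_measure:
  assumes "finite C" "\<forall>c\<in>C. p c \<ge> 0" "g \<in> borel_measurable borel"
  shows "inner_L2 (disc_measure C p a) g (expo l)
    = (\<Sum>c\<in>C. of_real (p c) * g (a c) * cnj (expo l (a c)))"
  unfolding inner_L2_def using assms
  by (subst integral_disc_measure) (auto simp: cnj_expo scaleR_conv_of_real mult_ac)

lemma fourier_measure_disc_measure:
  assumes "finite C" "\<forall>c\<in>C. p c \<ge> 0"
  shows "fourier_measure (disc_measure C p a) \<xi> = (\<Sum>c\<in>C. of_real (p c) * expo \<xi> (a c))"
  unfolding fourier_measure_def using assms
  by (subst integral_disc_measure) (auto simp: scaleR_conv_of_real)

lemma AE_disc_measure_iff:
  assumes "finite C" "\<forall>c\<in>C. p c > 0"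
  shows "(AE x in disc_measure C p a. P x) \<longleftrightarrow> (\<forall>c\<in>C. P (a c))"
proof
  assume ae: "AE x in disc_measure C p a. P x"
  show "\<forall>c\<in>C. P (a c)"
  proof
    fix c assume c: "c \<in> C"
    have "ennreal (p c) \<le> (\<Sum>c'\<in>C. if a c' \<in> {a c} then ennreal (p c') else 0)"
      using member_le_sum[OF c, of "\<lambda>c'. if a c' \<in> {a c} then ennreal (p c') else 0"] assms(1)
      by simp
    then have "emeasure (disc_measure C p a) {a c} > 0"
      using assms c by (simp add: emeasure_disc_measure) (meson ennreal_less_zero_iff less_le_trans)
    then show "P (a c)" using AE_atom[OF ae] by simp
  qed
next
  assume all: "\<forall>c\<in>C. P (a c)"
  have null_candidate: "UNIV - a ` C \<in> sets borel"
    using assms by (intro borel_open open_Diff finite_imp_closed) auto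
  show "AE x in disc_measure C p a. P x"
  proof (rule AE_I')
    show "UNIV - a ` C \<in> null_sets (disc_measure C p a)"
      using assms null_candidate by (simp add: null_sets_def emeasure_disc_measure)
  qed (use all in auto)
qed

lemma finite_measure_disc_measure:
  assumes "finite C"
  shows "finite_measure (disc_measure C p a)"
  by (rule finite_measureI) (use assms in \<open>simp add: emeasure_disc_measure\<close>)

lemma nn_integral_convolution_disc_measure:
  assumes "finite C" "finite_measure \<nu>" "sets \<nu> = sets borel" "h \<in> borel_measurable borel"
  shows "(\<integral>\<^sup>+x. h x \<partial>convolution (disc_measure C p a) \<nu>)
    = (\<Sum>c\<in>C. ennreal (p c) * (\<integral>\<^sup>+y. h (a c + y) \<partial>\<nu>))"
proof -
  interpret N: finite_measure \<nu> by fact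
  have "(\<lambda>(x, y). h (x + y)) \<in> borel_measurable (borel \<Otimes>\<^sub>M \<nu>)"
    using assms(3,4) by (simp add: measurable_cong_sets[OF sets_pair_measure_cong[OF refl assms(3)] refl])
  then have "(\<lambda>x. \<integral>\<^sup>+y. h (x + y) \<partial>\<nu>) \<in> borel_measurable borel"
    using N.borel_measurable_nn_integral_fst by simp
  then show ?thesis
    using assms by (simp add: nn_integral_convolution finite_measure_disc_measure nn_integral_disc_measure)
qed

lemma integrable_convolution_disc_measure_iff:
  fixes h :: "real \<Rightarrow> 'b::{banach, second_countable_topology}"
  assumes "finite C" "\<forall>c\<in>C. p c > 0" "finite_measure \<nu>" "sets \<nu> = sets borel"
    and "h \<in> borel_measurable borel"
  shows "integrable (convolution (disc_measure C p a) \<nu>) h \<longleftrightarrow> (\<forall>c\<in>C. integrable \<nu> (\<lambda>y. h (a c + y)))"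
proof -
  have "(\<integral>\<^sup>+x. norm (h x) \<partial>convolution (disc_measure C p a) \<nu>) < \<infinity>
      \<longleftrightarrow> (\<forall>c\<in>C. (\<integral>\<^sup>+y. norm (h (a c + y)) \<partial>\<nu>) < \<infinity>)"
    using assms by (force simp: nn_integral_convolution_disc_measure ennreal_mult_less_top)
  then show ?thesis
    using assms(4,5) by (simp add: integrable_iff_bounded measurable_cong_sets[OF assms(4) refl])
qed

lemma integral_convolution_disc_measure:
  fixes h :: "real \<Rightarrow> 'b::{banach, second_countable_topology}"
  assumes "finite C" "\<forall>c\<in>C. p c \<ge> 0" "finite_measure \<nu>" "sets \<nu> = sets borel"
    and "integrable (convolution (disc_measure C p a) \<nu>) h"
  shows "integral\<^sup>L (convolution (disc_measure C p a) \<nu>) h = (\<Sum>c\<in>C. p c *\<^sub>R (\<integral>y. h (a c + y) \<partial>\<nu>))"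
proof -
  interpret D: finite_measure "disc_measure C p a" by (rule finite_measure_disc_measure) fact
  interpret N: finite_measure \<nu> by fact
  interpret pair_sigma_finite "disc_measure C p a" \<nu> ..
  have h: "h \<in> borel_measurable borel" using borel_measurable_integrable[OF assms(5)] by simp
  have sum_meas: "(\<lambda>(x, y). x + y) \<in> measurable (disc_measure C p a \<Otimes>\<^sub>M \<nu>) borel"
    using assms(4) by (simp add: measurable_cong_sets[OF sets_pair_measure_cong[OF sets_disc_measure assms(4)] refl])
  have pair: "integrable (disc_measure C p a \<Otimes>\<^sub>M \<nu>) (\<lambda>(x, y). h (x + y))"
    using assms(5) h sum_meas by (simp add: convolution_def integrable_distr_eq case_prod_beta')
  have "integral\<^sup>L (convolution (disc_measure C p a) \<nu>) h
      = integral\<^sup>L (disc_measure C p a \<Otimes>\<^sub>M \<nu>) (\<lambda>(x, y). h (x + y))"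
    using h sum_meas by (simp add: convolution_def integral_distr case_prod_beta')
  also have "\<dots> = (\<integral>x. (\<integral>y. h (x + y) \<partial>\<nu>) \<partial>disc_measure C p a)"
    using integral_fst'[OF pair] by simp
  also have "\<dots> = (\<Sum>c\<in>C. p c *\<^sub>R (\<integral>y. h (a c + y) \<partial>\<nu>))"
  proof (rule integral_disc_measure[OF assms(1,2)])
    show "(\<lambda>x. \<integral>y. h (x + y) \<partial>\<nu>) \<in> borel_measurable borel"
      using borel_measurable_integrable[OF integrable_fst'[OF pair]] by simp
  qed
  finally show ?thesis .
qed

lemma emeasure_convolution_disc_measure:
  assumes "finite C" "finite_measure \<nu>" "sets \<nu> = sets borel" "A \<in> sets borel"
  shows "emeasure (convolution (disc_measure C p a) \<nu>) A
    = (\<Sum>c\<in>C. ennreal (p c) * emeasure \<nu> ((\<lambda>y. a c + y) -` A))"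
proof -
  have "emeasure (convolution (disc_measure C p a) \<nu>) A
      = (\<integral>\<^sup>+x. indicator A x \<partial>convolution (disc_measure C p a) \<nu>)"
    using assms(4) by simp
  also have "\<dots> = (\<Sum>c\<in>C. ennreal (p c) * (\<integral>\<^sup>+y. indicator ((\<lambda>y. a c + y) -` A) y \<partial>\<nu>))"
    using assms by (simp add: nn_integral_convolution_disc_measure indicator_def)
  also have "\<dots> = (\<Sum>c\<in>C. ennreal (p c) * emeasure \<nu> ((\<lambda>y. a c + y) -` A))"
  proof (intro sum.cong refl arg_cong2[where f=times] nn_integral_indicator)
    fix c
    have "(\<lambda>y. a c + y) -` A \<in> sets borel"
      using measurable_sets_borel[of "\<lambda>y. a c + y" borel A] assms(4) by simp
    then show "(\<lambda>y. a c + y) -` A \<in> sets \<nu>" using assms(3) by simp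
  qed
  finally show ?thesis .
qed

lemma AE_convolution_disc_measure_iff:
  assumes "finite C" "\<forall>c\<in>C. p c > 0" "finite_measure \<nu>" "sets \<nu> = sets borel"
    and "{x. P x} \<in> sets borel"
  shows "(AE x in convolution (disc_measure C p a) \<nu>. P x) \<longleftrightarrow> (\<forall>c\<in>C. AE y in \<nu>. P (a c + y))"
proof -
  have N: "{x. \<not> P x} \<in> sets borel"
    using sets.compl_sets[OF assms(5)] by (simp add: Compl_eq_Diff_UNIV[symmetric] Collect_neg_eq)
  have Nc: "(\<lambda>y. a c + y) -` {x. \<not> P x} \<in> sets \<nu>" for c
    using measurable_sets_borel[of "\<lambda>y. a c + y" borel, OF _ N] assms(4) by simp
  have "(AE x in convolution (disc_measure C p a) \<nu>. P x)
      \<longleftrightarrow> emeasure (convolution (disc_measure C p a) \<nu>) {x. \<not> P x} = 0"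
    using AE_iff_measurable[of "{x. \<not> P x}" _ P] N by simp
  also have "\<dots> \<longleftrightarrow> (\<forall>c\<in>C. emeasure \<nu> ((\<lambda>y. a c + y) -` {x. \<not> P x}) = 0)"
    using assms N by (force simp: emeasure_convolution_disc_measure sum_eq_0_iff)
  also have "\<dots> \<longleftrightarrow> (\<forall>c\<in>C. AE y in \<nu>. P (a c + y))"
  proof (intro ball_cong refl)
    fix c
    show "emeasure \<nu> ((\<lambda>y. a c + y) -` {x. \<not> P x}) = 0 \<longleftrightarrow> (AE y in \<nu>. P (a c + y))"
      using AE_iff_measurable[OF Nc, of "\<lambda>y. P (a c + y)"] sets_eq_imp_space_eq[OF assms(4)] by auto
  qed
  finally show ?thesis .
qed

lemma fourier_measure_convolution_disc_measure:
  assumes "finite C" "\<forall>c\<in>C. p c \<ge> 0" "finite_measure \<nu>" "sets \<nu> = sets borel"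
  shows "fourier_measure (convolution (disc_measure C p a) \<nu>) \<xi>
    = fourier_measure (disc_measure C p a) \<xi> * fourier_measure \<nu> \<xi>"
proof -
  have "finite_measure (convolution (disc_measure C p a) \<nu>)"
    using assms by (intro convolution_finite finite_measure_disc_measure) auto
  then have "integrable (convolution (disc_measure C p a) \<nu>) (expo \<xi>)"
    by (intro L2_integrable L2_bounded_measurable[where K=1]) auto
  then have "fourier_measure (convolution (disc_measure C p a) \<nu>) \<xi>
      = (\<Sum>c\<in>C. p c *\<^sub>R (\<integral>y. expo \<xi> (a c) * expo \<xi> y \<partial>\<nu>))"
    unfolding fourier_measure_def using assms by (simp add: integral_convolution_disc_measure expo_add)
  also have "\<dots> = (\<Sum>c\<in>C. of_real (p c) * expo \<xi> (a c)) * fourier_measure \<nu> \<xi>"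
    by (simp add: fourier_measure_def sum_distrib_right scaleR_conv_of_real mult.assoc)
  finally show ?thesis using assms by (simp add: fourier_measure_disc_measure)
qed

lemma integral_indicator_singleton_scaleR:
  fixes g :: "real \<Rightarrow> complex"
  assumes "finite_measure \<rho>" "sets \<rho> = sets borel"
  shows "(\<integral>x. indicator {s} x *\<^sub>R g x \<partial>\<rho>) = measure \<rho> {s} *\<^sub>R g s"
proof -
  interpret finite_measure \<rho> by fact
  have "(\<integral>x. indicator {s} x *\<^sub>R g x \<partial>\<rho>) = (\<integral>x. indicator {s} x *\<^sub>R g s \<partial>\<rho>)"
    by (intro Bochner_Integration.integral_cong refl) (auto simp: indicator_def)
  also have "\<dots> = measure \<rho> {s} *\<^sub>R g s"
  proof -
    have "integrable \<rho> (indicator {s} :: real \<Rightarrow> real)"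
      using assms(2) by (intro integrable_real_indicator) (auto simp: less_top[symmetric])
    then show ?thesis using sets_eq_imp_space_eq[OF assms(2)] by simp
  qed
  finally show ?thesis .
qed

lemma sum_indicator_singleton_at:
  fixes v :: "'i \<Rightarrow> 'a::real_vector"
  assumes "finite I" "i0 \<in> I" "\<forall>i\<in>I. s i = s i0 \<longrightarrow> i = i0"
  shows "(\<Sum>i\<in>I. indicator {s i} (s i0) *\<^sub>R v i) = v i0"
proof -
  have "(\<Sum>i\<in>I. indicator {s i} (s i0) *\<^sub>R v i) = (\<Sum>i\<in>I. if i = i0 then v i else 0)"
    using assms(3) by (intro sum.cong refl) (auto simp: indicator_def)
  then show ?thesis using assms(1,2) by simp
qed

lemma
  fixes w :: "'i \<Rightarrow> complex" and s :: "'i \<Rightarrow> real"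
  assumes "finite_measure \<rho>" "sets \<rho> = sets borel" "finite I" "\<forall>i\<in>I. measure \<rho> {s i} > 0"
  defines "F \<equiv> \<lambda>x. \<Sum>i\<in>I. indicator {s i} x *\<^sub>R (w i / of_real (measure \<rho> {s i}))"
  shows L2_point_masses: "F \<in> L2 \<rho>"
    and inner_L2_point_masses: "inner_L2 \<rho> F (expo l) = (\<Sum>i\<in>I. w i * cnj (expo l (s i)))"
proof -
  have L2_term: "(\<lambda>x. indicator {s i} x *\<^sub>R (w i / of_real (measure \<rho> {s i}))) \<in> L2 \<rho>" for i
    using assms(1,2)
    by (intro L2_bounded_measurable[where K="cmod (w i / of_real (measure \<rho> {s i}))"])
      (auto simp: indicator_def)
  then show "F \<in> L2 \<rho>" unfolding F_def by (rule L2_sum)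
  have "inner_L2 \<rho> F (expo l)
      = (\<Sum>i\<in>I. \<integral>x. indicator {s i} x *\<^sub>R (w i / of_real (measure \<rho> {s i}) * cnj (expo l x)) \<partial>\<rho>)"
    unfolding inner_L2_def F_def sum_distrib_right
    using integrable_inner_expo[OF assms(1,2) L2_term]
    by (subst Bochner_Integration.integral_sum) (auto simp: mult.assoc)
  also have "\<dots> = (\<Sum>i\<in>I. w i * cnj (expo l (s i)))"
  proof (intro sum.cong refl)
    fix i assume "i \<in> I"
    then have "measure \<rho> {s i} \<noteq> 0" using assms(4) by force
    then show "(\<integral>x. indicator {s i} x *\<^sub>R (w i / of_real (measure \<rho> {s i}) * cnj (expo l x)) \<partial>\<rho>)
        = w i * cnj (expo l (s i))"
      unfolding integral_indicator_singleton_scaleR[OF assms(1,2)] by (simp add: scaleR_conv_of_real)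
  qed
  finally show "inner_L2 \<rho> F (expo l) = (\<Sum>i\<in>I. w i * cnj (expo l (s i)))" .
qed

lemma equivp_representatives:
  assumes "equivp R"
  obtains S where "S \<subseteq> A" "\<forall>x\<in>A. \<exists>s\<in>S. R x s" "\<forall>s\<in>S. \<forall>s'\<in>S. R s s' \<longrightarrow> s = s'"
proof
  define rep where "rep x = (SOME y. y \<in> A \<and> R x y)" for x
  have rep: "rep x \<in> A \<and> R x (rep x)" if "x \<in> A" for x
    unfolding rep_def by (rule someI[of _ x]) (use that equivp_reflp[OF assms] in auto)
  have rep_eq: "rep x = rep y" if "R x y" for x y
    unfolding rep_def using that assms
    by (metis (no_types, lifting) equivp_symp equivp_transp)
  show "rep ` A \<subseteq> A" using rep by auto
  show "\<forall>x\<in>A. \<exists>s\<in>rep ` A. R x s" using rep by blast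
  show "\<forall>s\<in>rep ` A. \<forall>s'\<in>rep ` A. R s s' \<longrightarrow> s = s'"
    using rep rep_eq by (metis imageE)
qed

locale digit_convolution =
  fixes \<nu> :: "real measure" and q :: nat and C :: "nat set" and p :: "nat \<Rightarrow> real"
  assumes sets_nu [measurable_cong]: "sets \<nu> = sets borel"
    and prob_space_nu: "prob_space \<nu>"
    and finite_C: "finite C"
    and p_pos: "\<forall>c\<in>C. p c > 0"
    and sum_p: "(\<Sum>c\<in>C. p c) = 1"
    and q_ge_1: "q \<ge> 1"
    and zero_set_scaled_Ints: "\<forall>\<xi>\<in>zero_set \<nu>. real q * \<xi> \<in> \<int>"
begin

abbreviation "eta_q \<equiv> disc_measure C p (\<lambda>c. real q * real c)"
abbreviation "eta \<equiv> disc_measure C p real"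
abbreviation "mu \<equiv> convolution eta_q \<nu>"

lemma p_nonneg: "\<forall>c\<in>C. p c \<ge> 0"
  using p_pos by (auto intro: less_imp_le)

lemma space_nu [simp]: "space \<nu> = UNIV"
  using sets_eq_imp_space_eq[OF sets_nu] by simp

lemma borel_measurable_nu [simp]: "borel_measurable \<nu> = borel_measurable borel"
  by (rule measurable_cong_sets) (auto simp: sets_nu)

lemma finite_measure_nu: "finite_measure \<nu>"
  using prob_space_nu by (simp add: prob_space_def)

lemma C_nonempty: "C \<noteq> {}"
  using sum_p by auto

lemma integrable_mu_iff:
  fixes h :: "real \<Rightarrow> 'b::{banach, second_countable_topology}"
  assumes "h \<in> borel_measurable borel"
  shows "integrable mu h \<longleftrightarrow> (\<forall>c\<in>C. integrable \<nu> (\<lambda>y. h (real q * real c + y)))"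
  using integrable_convolution_disc_measure_iff[OF finite_C p_pos finite_measure_nu sets_nu assms] .

lemma integral_mu:
  fixes h :: "real \<Rightarrow> 'b::{banach, second_countable_topology}"
  assumes "integrable mu h"
  shows "integral\<^sup>L mu h = (\<Sum>c\<in>C. p c *\<^sub>R (\<integral>y. h (real q * real c + y) \<partial>\<nu>))"
  using integral_convolution_disc_measure[OF finite_C p_nonneg finite_measure_nu sets_nu assms] .

lemma AE_mu_iff:
  assumes "{x. P x} \<in> sets borel"
  shows "(AE x in mu. P x) \<longleftrightarrow> (\<forall>c\<in>C. AE y in \<nu>. P (real q * real c + y))"
  using AE_convolution_disc_measure_iff[OF finite_C p_pos finite_measure_nu sets_nu assms] .

lemma emeasure_mu_singleton_ge:
  assumes "c \<in> C"
  shows "ennreal (p c) * emeasure \<nu> {t} \<le> emeasure mu {real q * real c + t}"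
proof -
  have "ennreal (p c) * emeasure \<nu> {t}
      = ennreal (p c) * emeasure \<nu> ((\<lambda>y. real q * real c + y) -` {real q * real c + t})"
    by (simp add: vimage_def)
  also have "\<dots> \<le> (\<Sum>c'\<in>C. ennreal (p c') * emeasure \<nu> ((\<lambda>y. real q * real c' + y) -` {real q * real c + t}))"
    by (rule member_le_sum[OF assms]) (use finite_C in auto)
  also have "\<dots> = emeasure mu {real q * real c + t}"
    by (rule emeasure_convolution_disc_measure[symmetric, OF finite_C finite_measure_nu sets_nu]) simp
  finally show ?thesis .
qed

lemma prob_space_mu: "prob_space mu"
proof
  have "emeasure mu UNIV = (\<Sum>c\<in>C. ennreal (p c))"
    using prob_space.emeasure_space_1[OF prob_space_nu]
    by (simp add: emeasure_convolution_disc_measure[OF finite_C finite_measure_nu sets_nu])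
  then show "emeasure mu (space mu) = 1"
    using p_nonneg by (simp add: sum_ennreal sum_p)
qed

lemma finite_measure_mu: "finite_measure mu"
  using prob_space_mu by (simp add: prob_space_def)

lemma fourier_mu: "fourier_measure mu \<xi> = fourier_measure eta_q \<xi> * fourier_measure \<nu> \<xi>"
  using fourier_measure_convolution_disc_measure[OF finite_C p_nonneg finite_measure_nu sets_nu] .

lemma fourier_eta_q_eq_1:
  assumes "real q * \<xi> \<in> \<int>"
  shows "fourier_measure eta_q \<xi> = 1"
proof -
  have "expo \<xi> (real q * real c) = 1" for c
    using Ints_mult[OF assms Ints_of_nat[of c]] by (intro expo_eq_1_if_Ints) (simp add: mult_ac)
  then show ?thesis
    using finite_C p_nonneg by (simp add: fourier_measure_disc_measure sum_p flip: of_real_sum)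
qed

lemma fourier_eta_scaled: "fourier_measure eta (real q * \<xi>) = fourier_measure eta_q \<xi>"
  using finite_C p_nonneg by (simp add: fourier_measure_disc_measure expo_def mult_ac)

definition q_equiv :: "real \<Rightarrow> real \<Rightarrow> bool" where
  "q_equiv l l' \<longleftrightarrow> real q * (l - l') \<in> \<int>"

lemma equivp_q_equiv: "equivp q_equiv"
proof (rule equivpI)
  show "reflp q_equiv" by (simp add: reflp_def q_equiv_def)
  have "real q * (l' - l) = - (real q * (l - l'))" for l l' :: real
    by (simp add: algebra_simps)
  then show "symp q_equiv"
    unfolding symp_def q_equiv_def by (metis Ints_minus)
  have "real q * (l - l'') = real q * (l - l') + real q * (l' - l'')" for l l' l'' :: real
    by (simp add: algebra_simps)
  then show "transp q_equiv"
    unfolding transp_def q_equiv_def by (metis Ints_add)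
qed

lemma mu_spectrum_equiv:
  assumes "exp_ONB mu \<Lambda>" "l \<in> \<Lambda>" "l' \<in> \<Lambda>" "l \<noteq> l'" "q_equiv l l'"
  shows "fourier_measure \<nu> (l - l') = 0"
  using exp_ONB_diff_in_zero_set[OF assms(1-4)] assms(5)
  by (simp add: zero_set_def fourier_mu fourier_eta_q_eq_1 q_equiv_def)

lemma mu_spectrum_not_equiv:
  assumes "exp_ONB mu \<Lambda>" "l \<in> \<Lambda>" "l' \<in> \<Lambda>" "\<not> q_equiv l l'"
  shows "fourier_measure eta_q (l - l') = 0"
proof -
  have "l \<noteq> l'" using assms(4) equivp_reflp[OF equivp_q_equiv] by auto
  moreover have "fourier_measure \<nu> (l - l') \<noteq> 0"
    using zero_set_scaled_Ints assms(4) by (auto simp: zero_set_def q_equiv_def)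
  ultimately show ?thesis
    using exp_ONB_diff_in_zero_set[OF assms(1-3)] by (simp add: zero_set_def fourier_mu)
qed

lemma inner_L2_eta_expo_representatives:
  assumes "exp_ONB mu \<Lambda>" "R \<subseteq> \<Lambda>" "\<forall>r\<in>R. \<forall>r'\<in>R. q_equiv r r' \<longrightarrow> r = r'" "r \<in> R" "r' \<in> R"
  shows "inner_L2 eta (expo (real q * r)) (expo (real q * r')) = (if r = r' then 1 else 0)"
proof -
  have "inner_L2 eta (expo (real q * r)) (expo (real q * r')) = fourier_measure eta_q (r - r')"
    by (simp add: inner_L2_expo_expo fourier_eta_scaled flip: right_diff_distrib)
  moreover have "fourier_measure eta_q (r - r') = 0" if "r \<noteq> r'"
    using that assms mu_spectrum_not_equiv[OF assms(1)] by blast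
  ultimately show ?thesis using fourier_eta_q_eq_1[of 0] by auto
qed

lemma expo_q_equiv:
  assumes "q_equiv l l'"
  shows "expo l (real q * real n) = expo l' (real q * real n)"
proof -
  have "(l - l') * (real q * real n) \<in> \<int>"
    using Ints_mult[OF assms[unfolded q_equiv_def] Ints_of_nat[of n]] by (simp add: mult_ac)
  then have "expo (l - l') (real q * real n) = 1" by (rule expo_eq_1_if_Ints)
  then show ?thesis using expo_add_freq[of l' "l - l'"] by simp
qed

definition separating :: "(nat \<Rightarrow> real set) \<Rightarrow> bool" where
  "separating J \<longleftrightarrow> (\<forall>c\<in>C. J c \<in> sets borel) \<and> disjoint_family_on J C
     \<and> (\<forall>c\<in>C. AE y in \<nu>. real q * real c + y \<in> J c)"

definition glue :: "(nat \<Rightarrow> real set) \<Rightarrow> (nat \<Rightarrow> complex) \<Rightarrow> (real \<Rightarrow> complex) \<Rightarrow> real \<Rightarrow> complex" where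
  "glue J a f x = (\<Sum>c\<in>C. indicator (J c) x *\<^sub>R (a c * f (x - real q * real c)))"

context
  fixes J assumes J: "separating J"
begin

lemma borel_measurable_glue:
  assumes "f \<in> borel_measurable borel"
  shows "glue J a f \<in> borel_measurable borel"
  using J assms unfolding glue_def separating_def
  by (intro borel_measurable_sum borel_measurable_scaleR borel_measurable_indicator
      borel_measurable_times measurable_compose[OF _ assms]) auto

lemma AE_glue_translate:
  assumes "c \<in> C"
  shows "AE y in \<nu>. glue J a f (real q * real c + y) = a c * f y"
  using J assms unfolding separating_def
proof (elim conjE)
  assume disj: "disjoint_family_on J C" and ae: "\<forall>c\<in>C. AE y in \<nu>. real q * real c + y \<in> J c"
  from ae assms show ?thesis
  proof (elim ballE AE_mp, intro AE_I2 impI)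
    fix y assume y: "real q * real c + y \<in> J c"
    have "real q * real c + y \<notin> J c'" if "c' \<in> C" "c' \<noteq> c" for c'
      using y disj that assms by (auto simp: disjoint_family_on_def)
    then have "glue J a f (real q * real c + y) = (\<Sum>c'\<in>C. if c' = c then a c * f y else 0)"
      unfolding glue_def using y by (intro sum.cong refl) auto
    then show "glue J a f (real q * real c + y) = a c * f y"
      using assms finite_C by simp
  qed auto
qed

lemma L2_glue:
  assumes f: "f \<in> L2 \<nu>"
  shows "glue J a f \<in> L2 mu"
proof -
  have fm: "f \<in> borel_measurable borel" and fi: "integrable \<nu> (\<lambda>x. (cmod (f x))\<^sup>2)"
    using f by (auto simp: L2_def)
  have gm: "glue J a f \<in> borel_measurable borel" by (rule borel_measurable_glue[OF fm])
  have "integrable \<nu> (\<lambda>y. (cmod (glue J a f (real q * real c + y)))\<^sup>2)" if c: "c \<in> C" for c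
  proof (subst integrable_cong_AE)
    show "AE y in \<nu>. (cmod (glue J a f (real q * real c + y)))\<^sup>2 = (cmod (a c))\<^sup>2 * (cmod (f y))\<^sup>2"
      using AE_glue_translate[OF c, of a f] by eventually_elim (simp add: norm_mult power_mult_distrib)
  qed (use fi fm gm in auto)
  then have "integrable mu (\<lambda>x. (cmod (glue J a f x))\<^sup>2)"
    using gm by (subst integrable_mu_iff) auto
  then show ?thesis using gm by (simp add: L2_def)
qed

lemma inner_L2_glue:
  assumes f: "f \<in> L2 \<nu>"
  shows "inner_L2 mu (glue J a f) (expo l)
     = (\<Sum>c\<in>C. of_real (p c) * a c * cnj (expo l (real q * real c))) * inner_L2 \<nu> f (expo l)"
proof -
  have fm: "f \<in> borel_measurable borel" using f by (simp add: L2_def)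
  have gm: "glue J a f \<in> borel_measurable borel" by (rule borel_measurable_glue[OF fm])
  have "(\<integral>y. glue J a f (real q * real c + y) * cnj (expo l (real q * real c + y)) \<partial>\<nu>)
      = a c * cnj (expo l (real q * real c)) * inner_L2 \<nu> f (expo l)" if c: "c \<in> C" for c
  proof -
    have "(\<integral>y. glue J a f (real q * real c + y) * cnj (expo l (real q * real c + y)) \<partial>\<nu>)
        = (\<integral>y. a c * cnj (expo l (real q * real c)) * (f y * cnj (expo l y)) \<partial>\<nu>)"
      using AE_glue_translate[OF c, of a f] fm gm
      by (intro integral_cong_AE) (auto elim!: eventually_mono simp: expo_add cnj_expo)
    then show ?thesis unfolding inner_L2_def by simp
  qed
  moreover have "integrable mu (\<lambda>x. glue J a f x * cnj (expo l x))"
    using integrable_inner_expo[OF finite_measure_mu _ L2_glue[OF f]] by simp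
  ultimately have "inner_L2 mu (glue J a f) (expo l)
      = (\<Sum>c\<in>C. p c *\<^sub>R (a c * cnj (expo l (real q * real c)) * inner_L2 \<nu> f (expo l)))"
    unfolding inner_L2_def[of mu] by (simp add: integral_mu)
  then show ?thesis
    by (simp add: sum_distrib_right scaleR_conv_of_real mult.assoc)
qed

lemma AE_glue_zero_D:
  assumes "f \<in> borel_measurable borel" "AE x in mu. glue J a f x = 0" "c \<in> C"
  shows "AE y in \<nu>. a c * f y = 0"
proof -
  have "{x. glue J a f x = 0} \<in> sets borel"
    using borel_measurable_glue[OF assms(1)] by measurable
  then have "AE y in \<nu>. glue J a f (real q * real c + y) = 0"
    using assms(2,3) AE_mu_iff by blast
  with AE_glue_translate[OF assms(3), of a f] show ?thesis by eventually_elim simp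
qed

lemma spectral_nu_if_spectral_mu:
  assumes "countable \<Lambda>" and onb: "exp_ONB mu \<Lambda>"
  shows "spectral_measure \<nu>"
proof -
  obtain l0 where l0: "l0 \<in> \<Lambda>" using exp_ONB_nonempty[OF prob_space_mu onb] by auto
  define L0 where "L0 = {l \<in> \<Lambda>. q_equiv l l0}"
  have "exp_ONB \<nu> L0"
    unfolding exp_ONB_def
  proof (intro conjI ballI impI)
    fix l l' assume "l \<in> L0" "l' \<in> L0"
    then have l: "l \<in> \<Lambda>" "l' \<in> \<Lambda>" and "q_equiv l l0" "q_equiv l' l0"
      by (auto simp: L0_def)
    then have "q_equiv l l'"
      by (meson equivp_symp equivp_transp equivp_q_equiv)
    then show "inner_L2 \<nu> (expo l) (expo l') = (if l = l' then 1 else 0)"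
      using mu_spectrum_equiv[OF onb l] fourier_measure_zero[OF prob_space_nu]
      by (simp add: inner_L2_expo_expo)
  next
    fix f assume f: "f \<in> L2 \<nu>" and orth: "\<forall>l\<in>L0. inner_L2 \<nu> f (expo l) = 0"
    define a where "a c = expo l0 (real q * real c)" for c
    have "inner_L2 mu (glue J a f) (expo l) = 0" if l: "l \<in> \<Lambda>" for l
    proof -
      have "inner_L2 mu (glue J a f) (expo l) = fourier_measure eta_q (l0 - l) * inner_L2 \<nu> f (expo l)"
        using finite_C p_nonneg
        by (simp add: inner_L2_glue[OF f] fourier_measure_disc_measure a_def mult.assoc expo_mult_cnj)
      moreover have "q_equiv l l0 \<or> \<not> q_equiv l0 l"
        by (meson equivp_symp equivp_q_equiv)
      ultimately show ?thesis
        using orth l mu_spectrum_not_equiv[OF onb l0 l] unfolding L0_def by fastforce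
    qed
    then have "AE x in mu. glue J a f x = 0"
      using onb L2_glue[OF f] by (auto simp: exp_ONB_def)
    moreover obtain c where "c \<in> C" using C_nonempty by auto
    ultimately have "AE y in \<nu>. a c * f y = 0"
      using AE_glue_zero_D f by (auto simp: L2_def)
    then show "AE x in \<nu>. f x = 0" by eventually_elim (simp add: a_def)
  qed
  moreover have "countable L0" using assms(1) by (rule countable_subset[rotated]) (auto simp: L0_def)
  ultimately show ?thesis by (auto simp: spectral_measure_def)
qed

lemma spectral_eta_if_spectral_mu:
  assumes "countable \<Lambda>" and onb: "exp_ONB mu \<Lambda>"
  shows "spectral_measure eta"
proof -
  obtain R where R: "R \<subseteq> \<Lambda>" "\<forall>l\<in>\<Lambda>. \<exists>r\<in>R. q_equiv l r"
    and R_distinct: "\<forall>r\<in>R. \<forall>r'\<in>R. q_equiv r r' \<longrightarrow> r = r'"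
    using equivp_representatives[OF equivp_q_equiv] by blast
  have "exp_ONB eta ((\<lambda>r. real q * r) ` R)"
    unfolding exp_ONB_def
  proof (intro conjI ballI impI)
    fix a b assume "a \<in> (\<lambda>r. real q * r) ` R" "b \<in> (\<lambda>r. real q * r) ` R"
    then show "inner_L2 eta (expo a) (expo b) = (if a = b then 1 else 0)"
      using inner_L2_eta_expo_representatives[OF onb R(1) R_distinct] q_ge_1 by auto
  next
    fix g assume g: "g \<in> L2 eta" and orth: "\<forall>a\<in>(\<lambda>r. real q * r) ` R. inner_L2 eta g (expo a) = 0"
    have gm: "g \<in> borel_measurable borel" using g by (simp add: L2_def)
    define a where "a c = g (real c)" for c
    have one: "(\<lambda>_. 1) \<in> L2 \<nu>" by (rule L2_const[OF finite_measure_nu])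
    have "inner_L2 mu (glue J a (\<lambda>_. 1)) (expo l) = 0" if l: "l \<in> \<Lambda>" for l
    proof -
      obtain r where r: "r \<in> R" "q_equiv l r" using R l by blast
      have "(\<Sum>c\<in>C. of_real (p c) * a c * cnj (expo l (real q * real c))) = inner_L2 eta g (expo (real q * r))"
        using finite_C p_nonneg gm expo_q_equiv[OF r(2)]
        by (simp add: inner_L2_disc_measure a_def expo_def mult.commute mult.left_commute)
      then show ?thesis using orth r by (simp add: inner_L2_glue[OF one])
    qed
    then have glue_zero: "AE x in mu. glue J a (\<lambda>_. 1) x = 0"
      using onb L2_glue[OF one] by (auto simp: exp_ONB_def)
    have "AE y in \<nu>. a c * 1 = 0" if "c \<in> C" for c
      using AE_glue_zero_D[OF borel_measurable_const glue_zero that] .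
    then have "a c = 0" if "c \<in> C" for c
      using that prob_space.AE_const[OF prob_space_nu] by simp
    then show "AE x in eta. g x = 0"
      using finite_C p_pos by (simp add: AE_disc_measure_iff a_def)
  qed
  moreover have "countable ((\<lambda>r. real q * r) ` R)"
    using countable_subset[OF R(1) assms(1)] by simp
  ultimately show ?thesis by (auto simp: spectral_measure_def)
qed

end

lemma separating_translates:
  assumes "I \<in> sets borel" "AE y in \<nu>. y \<in> I"
    and inj: "\<And>c c' y y'. c \<in> C \<Longrightarrow> c' \<in> C \<Longrightarrow> y \<in> I \<Longrightarrow> y' \<in> I \<Longrightarrow>
      real q * real c + y = real q * real c' + y' \<Longrightarrow> c = c'"
  shows "separating (\<lambda>c. {x. x - real q * real c \<in> I})"
  unfolding separating_def
proof (intro conjI ballI)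
  fix c
  show "{x. x - real q * real c \<in> I} \<in> sets borel"
    using measurable_sets_borel[OF _ assms(1), of "\<lambda>x. x - real q * real c"] by (simp add: vimage_def)
  show "AE y in \<nu>. real q * real c + y \<in> {x. x - real q * real c \<in> I}"
    using assms(2) by simp
next
  show "disjoint_family_on (\<lambda>c. {x. x - real q * real c \<in> I}) C"
    unfolding disjoint_family_on_def
  proof (intro ballI impI equalityI subsetI)
    fix c c' x assume "c \<in> C" "c' \<in> C" "c \<noteq> c'"
      and "x \<in> {x. x - real q * real c \<in> I} \<inter> {x. x - real q * real c' \<in> I}"
    then show "x \<in> {}" using inj[of c c' "x - real q * real c" "x - real q * real c'"] by simp
  qed simp
qed

lemma translates_overlap:
  assumes "real q * real c + y = real q * real c' + y'" "c < c'" "y \<in> {0..1}" "y' \<in> {0..1}"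
  shows "q = 1 \<and> y = 1 \<and> y' = 0"
proof -
  have "real q * 1 \<le> real q * (real c' - real c)"
    using assms(2) by (intro mult_left_mono) auto
  moreover have "real q * (real c' - real c) = y - y'"
    using assms(1) by (simp add: algebra_simps)
  ultimately show ?thesis using assms(3,4) q_ge_1 by auto
qed

text \<open>Only for \<open>q = 1\<close> with atoms at both \<open>0\<close> and \<open>1\<close> do the translates \<open>q c + [0, 1]\<close> overlap
  in positive measure; otherwise removing a null endpoint makes them disjoint.\<close>

lemma separating_exists:
  assumes "measure_support \<nu> \<subseteq> {0..1}"
    and "\<not> (q = 1 \<and> emeasure \<nu> {0} > 0 \<and> emeasure \<nu> {1} > 0)"
  obtains J where "separating J"
proof -
  define E :: "real set" where
    "E = (if q = 1 then if emeasure \<nu> {1} = 0 then {1} else {0} else {})"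
  define I where "I = {0..1} - E"
  have "emeasure \<nu> E = 0" using assms(2) by (auto simp: E_def not_gr_zero)
  then have "AE y in \<nu>. y \<notin> E"
    by (intro AE_I'[of E]) (auto simp: null_sets_def E_def)
  moreover have "AE y in \<nu>. y \<in> {0..1}"
    using AE_measure_support[OF sets_nu] by eventually_elim (use assms(1) in auto)
  ultimately have "AE y in \<nu>. y \<in> I" by eventually_elim (simp add: I_def)
  moreover have "I \<in> sets borel" by (auto simp: I_def E_def)
  moreover have "c = c'" if "real q * real c + y = real q * real c' + y'" "y \<in> I" "y' \<in> I" for c c' y y'
    using translates_overlap[OF that(1)] translates_overlap[OF that(1)[symmetric]] that(2,3)
    by (cases c c' rule: linorder_cases) (auto simp: I_def E_def split: if_splits)
  ultimately show ?thesis using separating_translates that by blast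
qed

lemma measure_mu_singleton_pos:
  assumes "c \<in> C" "emeasure \<nu> {t} > 0"
  shows "measure mu {real q * real c + t} > 0"
proof -
  have "0 < ennreal (p c) * emeasure \<nu> {t}"
    using assms p_pos by (simp add: ennreal_zero_less_mult_iff)
  also have "\<dots> \<le> emeasure mu {real q * real c + t}" by (rule emeasure_mu_singleton_ge[OF assms(1)])
  finally show ?thesis
    using finite_measure.emeasure_eq_measure[OF finite_measure_mu] by simp
qed

lemma sum_two_point_weights:
  assumes "q = 1"
  shows "(\<Sum>i\<in>C \<times> {0::nat, 1}. of_real (p (fst i)) * expo l0 (real (fst i)) * (- expo l0 1) ^ snd i *
      cnj (expo l (real (fst i) + real (snd i))))
    = fourier_measure eta_q (l0 - l) * (1 - expo (l0 - l) 1)"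
proof -
  have "(\<Sum>t\<in>{0::nat, 1}. of_real (p c) * expo l0 (real c) * (- expo l0 1) ^ t * cnj (expo l (real c + real t)))
      = of_real (p c) * expo (l0 - l) (real c) * (1 - expo (l0 - l) 1)" for c
  proof -
    have "(\<Sum>t\<in>{0::nat, 1}. of_real (p c) * expo l0 (real c) * (- expo l0 1) ^ t * cnj (expo l (real c + real t)))
        = of_real (p c) * (expo l0 (real c) * cnj (expo l (real c)))
          * (1 - expo l0 1 * cnj (expo l 1))"
      by (simp add: expo_add algebra_simps)
    then show ?thesis by (simp only: expo_mult_cnj)
  qed
  then show ?thesis
    using finite_C p_nonneg
    by (simp add: sum.cartesian_product' fourier_measure_disc_measure assms sum_distrib_right)
qed

text \<open>
  For \<open>q = 1\<close> and atoms of \<open>\<nu>\<close> at \<open>0\<close> and \<open>1\<close>, the function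
  \<open>\<Sum>\<^sub>c p\<^sub>c e\<^sub>l\<^sub>0(c) (\<delta>\<^sub>c - e\<^sub>l\<^sub>0(1) \<delta>\<^sub>c\<^sub>+\<^sub>1)\<close>, normalised by the masses of the atoms, is orthogonal to
  every \<open>e\<^sub>l\<close>, \<open>l \<in> \<Lambda>\<close>, but does not vanish at \<open>min C\<close>.\<close>

lemma not_spectral_mu_if_atoms_0_1:
  assumes q: "q = 1" and atoms: "emeasure \<nu> {0} > 0" "emeasure \<nu> {1} > 0"
  shows "\<not> spectral_measure mu"
proof
  assume "spectral_measure mu"
  then obtain \<Lambda> where onb: "exp_ONB mu \<Lambda>" by (auto simp: spectral_measure_def)
  obtain l0 where l0: "l0 \<in> \<Lambda>" using exp_ONB_nonempty[OF prob_space_mu onb] by auto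
  define I where "I = C \<times> {0::nat, 1}"
  define s where "s i = real (fst i) + real (snd i)" for i
  define w where "w i = of_real (p (fst i)) * expo l0 (real (fst i)) * (- expo l0 1) ^ snd i" for i
  define F where "F x = (\<Sum>i\<in>I. indicator {s i} x *\<^sub>R (w i / of_real (measure mu {s i})))" for x
  have "measure mu {s i} > 0" if "i \<in> I" for i
    using measure_mu_singleton_pos[of "fst i" "real (snd i)"] that atoms by (auto simp: I_def s_def q)
  then have I: "finite I" "\<forall>i\<in>I. measure mu {s i} > 0"
    using finite_C by (auto simp: I_def)
  have "inner_L2 mu F (expo l) = 0" if l: "l \<in> \<Lambda>" for l
  proof -
    have "inner_L2 mu F (expo l) = (\<Sum>i\<in>I. w i * cnj (expo l (s i)))"
      unfolding F_def by (rule inner_L2_point_masses[OF finite_measure_mu _ I]) simp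
    also have "\<dots> = fourier_measure eta_q (l0 - l) * (1 - expo (l0 - l) 1)"
      unfolding I_def w_def s_def by (rule sum_two_point_weights[OF q])
    moreover have "expo (l0 - l) 1 = 1" if "q_equiv l0 l"
      using that[unfolded q_equiv_def] q by (intro expo_eq_1_if_Ints) simp
    ultimately show ?thesis using mu_spectrum_not_equiv[OF onb l0 l] by force
  qed
  moreover have "F \<in> L2 mu"
    unfolding F_def by (rule L2_point_masses[OF finite_measure_mu _ I]) simp
  ultimately have F_zero: "AE x in mu. F x = 0"
    using onb by (auto simp: exp_ONB_def)
  define c0 where "c0 = Min C"
  have c0: "c0 \<in> C" "\<forall>c\<in>C. c0 \<le> c" using finite_C C_nonempty by (auto simp: c0_def)
  have c0_I: "(c0, 0) \<in> I" "\<forall>i\<in>I. s i = s (c0, 0) \<longrightarrow> i = (c0, 0)"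
    using c0 by (auto simp: I_def s_def)
  have "F (s (c0, 0)) = 0"
    using AE_atom[OF F_zero] I(2) c0_I(1) by (force simp: finite_measure.emeasure_eq_measure[OF finite_measure_mu])
  moreover have "F (s (c0, 0)) = w (c0, 0) / of_real (measure mu {s (c0, 0)})"
    unfolding F_def by (rule sum_indicator_singleton_at[OF I(1) c0_I])
  ultimately show False using p_pos c0(1) I(2) c0_I(1) by (force simp: w_def)
qed

lemma fourier_eta_periodic:
  assumes "k \<in> \<int>"
  shows "fourier_measure eta (\<xi> + k) = fourier_measure eta \<xi>"
proof -
  have "expo k (real c) = 1" for c
    using assms by (intro expo_eq_1_if_Ints) simp
  then show ?thesis
    using finite_C p_nonneg by (simp add: fourier_measure_disc_measure expo_add_freq)
qed

lemma expo_fiber_split: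
  assumes "real q * b \<in> \<int>"
  shows "expo (a / real q + b) (real q * real c + y) = expo a (real c) * expo (a / real q) y * expo b y"
proof -
  have "expo b (real q * real c) = 1"
    using Ints_mult[OF assms Ints_of_nat[of c]] by (intro expo_eq_1_if_Ints) (simp add: mult_ac)
  moreover have "expo (a / real q) (real q * real c) = expo a (real c)"
    using q_ge_1 by (simp add: expo_def mult_ac)
  ultimately show ?thesis by (simp add: expo_add expo_add_freq mult_ac)
qed

lemma L2_translate:
  assumes "f \<in> L2 mu" "c \<in> C"
  shows "(\<lambda>y. f (real q * real c + y)) \<in> L2 \<nu>"
proof -
  have "f \<in> borel_measurable borel" "integrable mu (\<lambda>x. (cmod (f x))\<^sup>2)"
    using assms(1) by (auto simp: L2_def)
  then show ?thesis
    using assms(2) by (auto simp: L2_def integrable_mu_iff)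
qed

lemma integrable_translate_inner_expo:
  assumes "f \<in> L2 mu" "c \<in> C"
  shows "integrable \<nu> (\<lambda>y. f (real q * real c + y) * cnj (expo l (real q * real c + y)))"
proof -
  have "f \<in> borel_measurable borel" using assms(1) by (simp add: L2_def)
  then have "(\<lambda>x. f x * cnj (expo l x)) \<in> borel_measurable borel" by (simp add: cnj_expo)
  then show ?thesis
    using integrable_inner_expo[OF finite_measure_mu _ assms(1), of l] assms(2)
      integrable_mu_iff[of "\<lambda>x. f x * cnj (expo l x)"] by simp
qed

text \<open>The twist by \<open>e\<^bsub>a/q\<^esub>\<close> makes the \<open>\<nu>\<close>-coefficient at \<open>b\<close> equal the \<open>\<mu>\<close>-coefficient of \<open>f\<close>
  at \<open>a / q + b\<close> (\<open>inner_L2_fiber_coefficient\<close>).\<close>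

definition fiber_coefficient :: "(real \<Rightarrow> complex) \<Rightarrow> real \<Rightarrow> real \<Rightarrow> complex" where
  "fiber_coefficient f a y = inner_L2 eta (\<lambda>x. f (real q * x + y)) (expo a) * cnj (expo (a / real q) y)"

lemma fiber_coefficient_eq:
  assumes "f \<in> L2 mu"
  shows "fiber_coefficient f a y = (\<Sum>c\<in>C. of_real (p c) * cnj (expo a (real c)) *
      (f (real q * real c + y) * cnj (expo (a / real q) y)))"
proof -
  have "f \<in> borel_measurable borel" using assms by (simp add: L2_def)
  then have "(\<lambda>x. f (real q * x + y)) \<in> borel_measurable borel"
    using measurable_compose[of "\<lambda>x. real q * x + y" borel borel f borel] by simp
  then show ?thesis
    using finite_C p_nonneg
    by (simp add: fiber_coefficient_def inner_L2_disc_measure sum_distrib_left mult_ac)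
qed

lemma L2_fiber_coefficient:
  assumes "f \<in> L2 mu"
  shows "fiber_coefficient f a \<in> L2 \<nu>"
proof -
  have "(\<lambda>y. f (real q * real c + y) * cnj (expo (a / real q) y)) \<in> L2 \<nu>" if "c \<in> C" for c
    using L2_translate[OF assms that] by (rule L2_mult_bounded[where K=1]) (auto simp: cnj_expo)
  then show ?thesis
    unfolding fiber_coefficient_eq[OF assms, abs_def] by (intro L2_sum L2_cmult)
qed

lemma inner_L2_fiber_coefficient:
  assumes f: "f \<in> L2 mu" and b: "real q * b \<in> \<int>"
  shows "inner_L2 \<nu> (fiber_coefficient f a) (expo b) = inner_L2 mu f (expo (a / real q + b))"
proof -
  have "fiber_coefficient f a y * cnj (expo b y) = (\<Sum>c\<in>C. of_real (p c) *
      (f (real q * real c + y) * cnj (expo (a / real q + b) (real q * real c + y))))" for y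
    unfolding fiber_coefficient_eq[OF f] sum_distrib_right expo_fiber_split[OF b]
    by (intro sum.cong refl) (simp add: mult_ac)
  then have "inner_L2 \<nu> (fiber_coefficient f a) (expo b) = (\<Sum>c\<in>C. p c *\<^sub>R
      (\<integral>y. f (real q * real c + y) * cnj (expo (a / real q + b) (real q * real c + y)) \<partial>\<nu>))"
    unfolding inner_L2_def using integrable_translate_inner_expo[OF f]
    by (simp add: Bochner_Integration.integral_sum scaleR_conv_of_real)
  also have "\<dots> = inner_L2 mu f (expo (a / real q + b))"
    unfolding inner_L2_def using integrable_inner_expo[OF finite_measure_mu _ f]
    by (simp add: integral_mu)
  finally show ?thesis .
qed

lemma fourier_eta_q_fiber_frequency:
  assumes "real q * b \<in> \<int>" "real q * b' \<in> \<int>"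
  shows "fourier_measure eta_q (a / real q + b - (a' / real q + b')) = fourier_measure eta (a - a')"
proof -
  have "real q * (a / real q + b - (a' / real q + b')) = (a - a') + (real q * b - real q * b')"
    using q_ge_1 by (simp add: field_simps)
  then show ?thesis
    using fourier_eta_periodic[OF Ints_diff[OF assms]] by (simp flip: fourier_eta_scaled)
qed

lemma inner_L2_mu_expo_product:
  assumes "exp_ONB eta S" "exp_ONB \<nu> T" "\<forall>b\<in>T. real q * b \<in> \<int>"
    and ab: "a \<in> S" "b \<in> T" and ab': "a' \<in> S" "b' \<in> T"
  defines "l \<equiv> a / real q + b" and "l' \<equiv> a' / real q + b'"
  shows "inner_L2 mu (expo l) (expo l') = (if l = l' then 1 else 0)"
proof -
  have "inner_L2 mu (expo l) (expo l') = inner_L2 eta (expo a) (expo a') * fourier_measure \<nu> (l - l')"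
    using assms(3) ab ab' fourier_eta_q_fiber_frequency[of b b' a a']
    by (simp add: l_def l'_def inner_L2_expo_expo fourier_mu)
  moreover have "inner_L2 mu (expo l) (expo l) = 1"
    using fourier_measure_zero[OF prob_space_nu] fourier_eta_q_eq_1[of 0]
    by (simp add: inner_L2_expo_expo fourier_mu)
  moreover have "fourier_measure \<nu> (l - l') = 0" if "a = a'" "l \<noteq> l'"
    using that ab ab' assms(2) by (auto simp: exp_ONB_def inner_L2_expo_expo l_def l'_def)
  ultimately show ?thesis
    using assms(1) ab ab' by (auto simp: exp_ONB_def)
qed

lemma zero_if_fiber_coefficients_zero:
  assumes "exp_ONB eta S" "f \<in> L2 mu" "\<forall>a\<in>S. fiber_coefficient f a y = 0" "c \<in> C"
  shows "f (real q * real c + y) = 0"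
proof -
  have "(\<lambda>x. f (real q * x + y)) \<in> L2 eta"
    using assms(2) finite_C p_nonneg measurable_compose[of "\<lambda>x. real q * x + y" borel borel f borel]
    by (intro L2_disc_measure) (auto simp: L2_def)
  moreover have "\<forall>a\<in>S. inner_L2 eta (\<lambda>x. f (real q * x + y)) (expo a) = 0"
    using assms(3) by (simp add: fiber_coefficient_def)
  ultimately have "AE x in eta. f (real q * x + y) = 0"
    using assms(1) by (auto simp: exp_ONB_def)
  then show ?thesis using assms(4) finite_C p_pos by (simp add: AE_disc_measure_iff)
qed

lemma exp_ONB_mu_product:
  assumes S: "countable S" "exp_ONB eta S"
    and T: "exp_ONB \<nu> T" "\<forall>b\<in>T. real q * b \<in> \<int>"
  shows "exp_ONB mu ((\<lambda>(a, b). a / real q + b) ` (S \<times> T))"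
  unfolding exp_ONB_def
proof (intro conjI ballI impI)
  fix l l' assume "l \<in> (\<lambda>(a, b). a / real q + b) ` (S \<times> T)" "l' \<in> (\<lambda>(a, b). a / real q + b) ` (S \<times> T)"
  then show "inner_L2 mu (expo l) (expo l') = (if l = l' then 1 else 0)"
    using inner_L2_mu_expo_product[OF S(2) T] by auto
next
  fix f assume f: "f \<in> L2 mu"
    and orth: "\<forall>l\<in>(\<lambda>(a, b). a / real q + b) ` (S \<times> T). inner_L2 mu f (expo l) = 0"
  have "AE y in \<nu>. fiber_coefficient f a y = 0" if "a \<in> S" for a
  proof -
    have "inner_L2 \<nu> (fiber_coefficient f a) (expo b) = 0" if "b \<in> T" for b
      using inner_L2_fiber_coefficient[OF f] orth \<open>a \<in> S\<close> that T(2) by force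
    then show ?thesis
      using T(1) L2_fiber_coefficient[OF f] by (auto simp: exp_ONB_def)
  qed
  then have "AE y in \<nu>. \<forall>a\<in>S. fiber_coefficient f a y = 0" by (rule AE_ball_countable'[OF _ S(1)])
  then have "\<forall>c\<in>C. AE y in \<nu>. f (real q * real c + y) = 0"
    using zero_if_fiber_coefficients_zero[OF S(2) f] by (auto elim: eventually_mono)
  moreover have "f \<in> borel_measurable borel" using f by (simp add: L2_def)
  then have "{x. f x = 0} \<in> sets borel" by measurable
  ultimately show "AE x in mu. f x = 0" by (simp add: AE_mu_iff)
qed

lemma spectral_mu_if_spectral:
  assumes "spectral_measure eta" "spectral_measure \<nu>"
  shows "spectral_measure mu"
proof -
  obtain S where S: "countable S" "exp_ONB eta S"
    using assms(1) by (auto simp: spectral_measure_def)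
  obtain T0 where T0: "countable T0" "exp_ONB \<nu> T0"
    using assms(2) by (auto simp: spectral_measure_def)
  obtain b0 where b0: "b0 \<in> T0" using exp_ONB_nonempty[OF prob_space_nu T0(2)] by auto
  define T where "T = (\<lambda>l. l - b0) ` T0"
  have T: "countable T" "exp_ONB \<nu> T" "0 \<in> T"
    unfolding T_def using T0 b0 exp_ONB_translate[OF finite_measure_nu sets_nu T0(2)] by auto
  have "\<forall>b\<in>T. real q * b \<in> \<int>"
    using exp_ONB_diff_in_zero_set[OF T(2) _ T(3)] zero_set_scaled_Ints by force
  then have "exp_ONB mu ((\<lambda>(a, b). a / real q + b) ` (S \<times> T))"
    by (rule exp_ONB_mu_product[OF S T(2)])
  moreover have "countable ((\<lambda>(a, b). a / real q + b) ` (S \<times> T))" using S(1) T(1) by simp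
  ultimately show ?thesis by (auto simp: spectral_measure_def)
qed

theorem spectral_mu_iff:
  assumes "measure_support \<nu> \<subseteq> {0..1}"
  shows "spectral_measure mu \<longleftrightarrow> spectral_measure eta \<and> spectral_measure \<nu>"
proof
  assume mu: "spectral_measure mu"
  then obtain \<Lambda> where \<Lambda>: "countable \<Lambda>" "exp_ONB mu \<Lambda>" by (auto simp: spectral_measure_def)
  have "\<not> (q = 1 \<and> emeasure \<nu> {0} > 0 \<and> emeasure \<nu> {1} > 0)"
    using not_spectral_mu_if_atoms_0_1 mu by blast
  then obtain J where "separating J" using separating_exists[OF assms] by blast
  then show "spectral_measure eta \<and> spectral_measure \<nu>"
    using spectral_eta_if_spectral_mu spectral_nu_if_spectral_mu \<Lambda> by blast
qed (use spectral_mu_if_spectral in blast)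

end

theorem theorem5p3:
  fixes \<nu> :: "real measure" and q :: nat and C :: "nat set" and p :: "nat \<Rightarrow> real"
  assumes "sets \<nu> = sets borel" and "prob_space \<nu>"
    and "measure_support \<nu> \<subseteq> {0..1}"
    and "R_spectral_measure \<nu>"
    and "q \<ge> 1"
    and "\<forall>\<xi>\<in>zero_set \<nu>. real q * \<xi> \<in> \<int>"
    and "finite C"
    and "\<forall>c\<in>C. p c > 0" and "(\<Sum>c\<in>C. p c) = 1"
  shows "spectral_measure (convolution (disc_measure C p (\<lambda>c. real (q * c))) \<nu>)
     \<longleftrightarrow> spectral_measure (disc_measure C p real) \<and> spectral_measure \<nu>"
proof -
  interpret digit_convolution \<nu> q C p
    by (rule digit_convolution.intro) (fact assms)+
  have "(\<lambda>c. real (q * c)) = (\<lambda>c. real q * real c)" by auto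
  with spectral_mu_iff[OF assms(3)] show ?thesis by (simp only:)
qed

end
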